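(* Let $f(a,b,c,d,e,x,y)$ be analytic in a neighbourhood of the origin of $\mathbb{C}^7$. Suppose that, with $F(X,Y)=f(a,b,c,d,e,X,Y)$, $f$ satisfies in a neighbourhood of the origin the equation $$x\Big\{F(xq,y)-F(xq,yq)-(d+e)q^{-1}\big[F(xq,yq)-F(xq,yq^2)\big]+de\,q^{-2}\big[F(xq,yq^2)-F(xq,yq^3)\big]\Big\}$$ $$=y\Big\{\big[F(xq,yq)-F(x,yq)\big]-(a+b+c)\big[F(xq,yq^2)-F(x,yq^2)\big]+(ab+ac+bc)\big[F(xq,yq^3)-F(x,yq^3)\big]-abc\big[F(xq,yq^4)-F(x,yq^4)\big]\Big\}.$$ Then $$f(a,b,c,d,e,x,y)=\mathbb{E}(a,b,c,d,e,y\theta_x)\{f(a,b,c,d,e,x,0)\}.$$ Precisely: writing $f=\sum_{k\ge0}A_k(x)y^k$ (with $a,b,c,d,e$ fixed), one has for each $k\ge0$, as power series in $x$, $$A_k(x)=\frac{(-1)^kq^{\binom k2}(a,b,c;q)_k}{(q,d,e;q)_k}\,\theta_x^k\{f(a,b,c,d,e,x,0)\}.$$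
   Context: Throughout, $0<q<1$. $(\alpha;q)_0=1$, $(\alpha;q)_n=\prod_{j=0}^{n-1}(1-\alpha q^j)$, and $(\alpha_1,\dots,\alpha_r;q)_n=\prod_i(\alpha_i;q)_n$. $\theta_x$ is the $q$-difference operator $\theta_x\{g(x)\}=\frac{g(xq^{-1})-g(x)}{q^{-1}x}$. On power series it acts termwise by $\theta_x\{x^m\}=q^{1-m}(1-q^m)x^{m-1}$. The operator is $\mathbb{E}(a,b,c,d,e,y\theta_x)=\sum_{n\ge0}\frac{(-1)^nq^{\binom n2}(a,b,c;q)_n}{(q,d,e;q)_n}(y\theta_x)^n$. *)

theory Defs
  imports "HOL-Analysis.Analysis" "HOL-Computational_Algebra.Formal_Power_Series"
begin

definition qpoch :: "complex \<Rightarrow> complex \<Rightarrow> nat \<Rightarrow> complex" where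
  "qpoch \<alpha> q n = (\<Prod>j<n. 1 - \<alpha> * q ^ j)"

text \<open>The q-difference operator theta_x acting termwise on formal power series in x:
  theta_x x^m = q^(1-m) (1-q^m) x^(m-1), so the coefficient of x^n in theta g is
  q^(-n) (1 - q^(n+1)) times the coefficient of x^(n+1) in g.\<close>
definition qtheta :: "complex \<Rightarrow> complex fps \<Rightarrow> complex fps" where
  "qtheta q g = Abs_fps (\<lambda>n. (inverse q) ^ n * (1 - q ^ (Suc n)) * fps_nth g (Suc n))"

text \<open>Coefficient of the n-th term of the operator E(a,b,c,d,e, y theta_x).\<close>
definition Ecoeff :: "complex \<Rightarrow> complex \<Rightarrow> complex \<Rightarrow> complex \<Rightarrow> complex \<Rightarrow> complex \<Rightarrow> nat \<Rightarrow> complex" where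
  "Ecoeff q a b c d e n =
     (-1) ^ n * q ^ (n choose 2) * (qpoch a q n * qpoch b q n * qpoch c q n)
       / (qpoch q q n * qpoch d q n * qpoch e q n)"

definition analytic_polydisc7 ::
  "(complex \<Rightarrow> complex \<Rightarrow> complex \<Rightarrow> complex \<Rightarrow> complex \<Rightarrow> complex \<Rightarrow> complex \<Rightarrow> complex)
    \<Rightarrow> real \<Rightarrow> bool" where
  "analytic_polydisc7 f r \<longleftrightarrow>
    (\<exists>co :: nat \<Rightarrow> nat \<Rightarrow> nat \<Rightarrow> nat \<Rightarrow> nat \<Rightarrow> nat \<Rightarrow> nat \<Rightarrow> complex.
      \<forall>z1 z2 z3 z4 z5 z6 z7.
        norm z1 < r \<and> norm z2 < r \<and> norm z3 < r \<and> norm z4 < r \<and> norm z5 < r \<and>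
        norm z6 < r \<and> norm z7 < r \<longrightarrow>
        ((\<lambda>(i1, i2, i3, i4, i5, i6, i7). co i1 i2 i3 i4 i5 i6 i7 *
            z1 ^ i1 * z2 ^ i2 * z3 ^ i3 * z4 ^ i4 * z5 ^ i5 * z6 ^ i6 * z7 ^ i7)
          has_sum f z1 z2 z3 z4 z5 z6 z7) UNIV)"

end

theory Submission
  imports Defs
begin

text \<open>Write f a b c d e x y as the double series of C m k x^m y^k. The dilations x \<mapsto> xQ and
  y \<mapsto> yQ^j multiply C m k by Q^m Q^(jk), so both sides of the functional equation are double
  power series whose coefficients are C m k times a polynomial in Q^k; these polynomials factor as
  (1 - Q^k)(1 - d Q^(k-1))(1 - e Q^(k-1)) and Q^k (1 - a Q^k)(1 - b Q^k)(1 - c Q^k). By the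
  identity theorem for double power series the coefficients of x^(m+1) y^(k+1) agree, which
  expresses the row C _ (k+1) through theta_x applied to the row C _ k, with exactly the ratio
  Ecoeff (k+1) / Ecoeff k.\<close>

abbreviation double_powser_has_sum :: "(nat \<Rightarrow> nat \<Rightarrow> 'a::real_normed_field) \<Rightarrow> 'a \<Rightarrow> 'a \<Rightarrow> 'a \<Rightarrow> bool"
  where "double_powser_has_sum C x y S \<equiv> ((\<lambda>(m, k). C m k * x ^ m * y ^ k) has_sum S) UNIV"

lemma double_powser_has_sum_cong:
  assumes "double_powser_has_sum C x y S" "\<And>m k. C m k = D m k" "S = T"
  shows "double_powser_has_sum D x y T"
  using assms by simp

lemma double_powser_has_sum_add:
  assumes "double_powser_has_sum C x y S" "double_powser_has_sum D x y T"
  shows "double_powser_has_sum (\<lambda>m k. C m k + D m k) x y (S + T)"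
  using has_sum_add[OF assms] by (rule has_sum_cong[THEN iffD1, rotated]) (auto simp: algebra_simps)

lemma double_powser_has_sum_cmult:
  assumes "double_powser_has_sum C x y S"
  shows "double_powser_has_sum (\<lambda>m k. \<alpha> * C m k) x y (\<alpha> * S)"
  using has_sum_cmult_right[OF assms, of \<alpha>]
  by (rule has_sum_cong[THEN iffD1, rotated]) (auto simp: algebra_simps)

lemma double_powser_has_sum_diff:
  assumes "double_powser_has_sum C x y S" "double_powser_has_sum D x y T"
  shows "double_powser_has_sum (\<lambda>m k. C m k - D m k) x y (S - T)"
  using double_powser_has_sum_add[OF assms(1) double_powser_has_sum_cmult[OF assms(2), of "-1"]]
  by simp

lemma double_powser_has_sum_shift_x:
  assumes "double_powser_has_sum C x y S"
  shows "double_powser_has_sum (\<lambda>m k. if m = 0 then 0 else C (m - 1) k) x y (x * S)"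
proof -
  let ?g = "\<lambda>(m, k). (if m = 0 then 0 else C (m - 1) k) * x ^ m * y ^ k"
  let ?h = "\<lambda>(m::nat, k::nat). (Suc m, k)"
  have "((\<lambda>p. x * (\<lambda>(m, k). C m k * x ^ m * y ^ k) p) has_sum (x * S)) UNIV"
    by (rule has_sum_cmult_right[OF assms])
  moreover have "(\<lambda>p. x * (\<lambda>(m, k). C m k * x ^ m * y ^ k) p) = ?g \<circ> ?h"
    by (auto simp: fun_eq_iff mult_ac)
  ultimately have "(?g has_sum (x * S)) (range ?h)"
    by (simp add: has_sum_reindex inj_on_def)
  moreover have "?g p = 0" if "p \<notin> range ?h" for p
    using that by (cases p) (auto simp: gr0_conv_Suc)
  ultimately show ?thesis
    using has_sum_cong_neutral[of UNIV "range ?h" ?g ?g] by blast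
qed

lemma double_powser_has_sum_shift_y:
  assumes "double_powser_has_sum C x y S"
  shows "double_powser_has_sum (\<lambda>m k. if k = 0 then 0 else C m (k - 1)) x y (y * S)"
proof -
  let ?g = "\<lambda>(m, k). (if k = 0 then 0 else C m (k - 1)) * x ^ m * y ^ k"
  let ?h = "\<lambda>(m::nat, k::nat). (m, Suc k)"
  have "((\<lambda>p. y * (\<lambda>(m, k). C m k * x ^ m * y ^ k) p) has_sum (y * S)) UNIV"
    by (rule has_sum_cmult_right[OF assms])
  moreover have "(\<lambda>p. y * (\<lambda>(m, k). C m k * x ^ m * y ^ k) p) = ?g \<circ> ?h"
    by (auto simp: fun_eq_iff mult_ac)
  ultimately have "(?g has_sum (y * S)) (range ?h)"
    by (simp add: has_sum_reindex inj_on_def)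
  moreover have "?g p = 0" if "p \<notin> range ?h" for p
    using that by (cases p) (auto simp: gr0_conv_Suc)
  ultimately show ?thesis
    using has_sum_cong_neutral[of UNIV "range ?h" ?g ?g] by blast
qed

lemma double_powser_has_sum_rescale:
  assumes ser: "\<And>x y. norm x < \<rho> \<Longrightarrow> norm y < \<rho> \<Longrightarrow> double_powser_has_sum C x y (F x y)"
    and x: "norm x < \<rho>" and y: "norm y < \<rho>" and u: "norm u \<le> 1" and w: "norm w \<le> 1"
  shows "double_powser_has_sum (\<lambda>m k. C m k * u ^ m * w ^ k) x y (F (x * u) (y * w))"
proof -
  have "norm (x * u) < \<rho>" "norm (y * w) < \<rho>"
    using mult_left_le[OF u norm_ge_zero, of x] mult_left_le[OF w norm_ge_zero, of y] x y
    by (simp_all add: norm_mult)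
  from ser[OF this] show ?thesis
    by (rule has_sum_cong[THEN iffD1, rotated]) (auto simp: power_mult_distrib mult_ac)
qed

lemma powser_eq_0:
  fixes a :: "nat \<Rightarrow> 'a::{real_normed_field, banach}"
  assumes s: "0 < s" and sum0: "\<And>x. norm x < s \<Longrightarrow> ((\<lambda>n. a n * x ^ n) has_sum 0) UNIV"
  shows "a n = 0"
proof (induction n rule: less_induct)
  case (less n)
  have "((\<lambda>x::'a. 0) \<longlongrightarrow> a (0 + n)) (at 0)"
  proof (rule powser_limit_0_strong[OF s, where a = "\<lambda>i. a (i + n)" and f = "\<lambda>_. 0"])
    fix x :: 'a
    assume x: "x \<noteq> 0" "norm x < s"
    have "(\<lambda>i. a i * x ^ i) sums 0"
      using sum0[OF x(2)] by (rule has_sum_imp_sums)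
    moreover have "(\<Sum>i<n. a i * x ^ i) = 0"
      using less by simp
    ultimately have "(\<lambda>i. a (i + n) * x ^ (i + n) / x ^ n) sums (0 / x ^ n)"
      using sums_iff_shift[of "\<lambda>i. a i * x ^ i" n 0] sums_divide by fastforce
    moreover have "(\<lambda>i. a (i + n) * x ^ (i + n) / x ^ n) = (\<lambda>i. a (i + n) * x ^ i)"
      using x(1) by (auto simp: power_add)
    ultimately show "(\<lambda>i. a (i + n) * x ^ i) sums 0"
      by simp
  qed
  then show ?case
    by (metis LIM_const_eq add_0)
qed

lemma double_powser_eq_0:
  fixes D :: "nat \<Rightarrow> nat \<Rightarrow> complex"
  assumes s: "0 < s"
    and sum0: "\<And>x y. norm x < s \<Longrightarrow> norm y < s \<Longrightarrow> double_powser_has_sum D x y 0"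
  shows "D m k = 0"
proof -
  have row_sum0: "((\<lambda>k. D m k * y ^ k) has_sum 0) UNIV" if y: "norm y < s" for y m
  proof -
    define x0 :: complex where "x0 = of_real (s / 2)"
    have x0: "norm x0 < s" "x0 \<noteq> 0"
      using s by (auto simp: x0_def)
    have row_summable: "(\<lambda>k. D m k * y ^ k) summable_on UNIV" for m
    proof -
      have "(\<lambda>(m, k). D m k * x0 ^ m * y ^ k) summable_on Sigma UNIV (\<lambda>_. UNIV)"
        using sum0[OF x0(1) y] by (auto simp: summable_on_def)
      from summable_on_SigmaD1[OF this, of m]
      have "(\<lambda>k. x0 ^ m * (D m k * y ^ k)) summable_on UNIV"
        by (simp add: mult_ac)
      with x0(2) show ?thesis
        using summable_on_cmult_right'[of "x0 ^ m" "\<lambda>k. D m k * y ^ k" UNIV] by simp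
    qed
    define b where "b m = infsum (\<lambda>k. D m k * y ^ k) UNIV" for m
    have "((\<lambda>m. b m * x ^ m) has_sum 0) UNIV" if x: "norm x < s" for x
    proof (rule has_sum_SigmaD[where B = "\<lambda>_. UNIV"])
      show "((\<lambda>(m, k). D m k * x ^ m * y ^ k) has_sum 0) (Sigma UNIV (\<lambda>_. UNIV))"
        using sum0[OF x y] by simp
      fix m :: nat
      have "((\<lambda>k. x ^ m * (D m k * y ^ k)) has_sum (x ^ m * b m)) UNIV"
        unfolding b_def by (rule has_sum_cmult_right) (use row_summable in simp)
      then show "((\<lambda>k. (\<lambda>(m, k). D m k * x ^ m * y ^ k) (m, k)) has_sum (b m * x ^ m)) UNIV"
        by (simp add: mult_ac)
    qed
    then have "b m = 0"
      by (rule powser_eq_0[OF s])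
    with has_sum_infsum[OF row_summable[of m]] show ?thesis
      by (simp add: b_def)
  qed
  then show ?thesis
    by (rule powser_eq_0[OF s])
qed

lemma qpoch_Suc: "qpoch a q (Suc n) = qpoch a q n * (1 - a * q ^ n)"
  by (simp add: qpoch_def)

lemma qpoch_nonzero:
  fixes \<alpha> q :: complex
  assumes "norm \<alpha> < 1" "norm q \<le> 1"
  shows "qpoch \<alpha> q n \<noteq> 0"
proof -
  have "norm (\<alpha> * q ^ j) \<le> norm \<alpha>" for j
    using assms(2) by (simp add: norm_mult norm_power power_le_one mult_left_le)
  then have "norm (\<alpha> * q ^ j) < 1" for j
    using assms(1) by (rule le_less_trans)
  then have "1 - \<alpha> * q ^ j \<noteq> 0" for j
    by (metis eq_iff_diff_eq_0 norm_one order.irrefl)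
  then show ?thesis
    by (simp add: qpoch_def)
qed

lemma Ecoeff_Suc:
  "Ecoeff q a b c d e (Suc k) = - Ecoeff q a b c d e k *
     (q ^ k * (1 - a * q ^ k) * (1 - b * q ^ k) * (1 - c * q ^ k)) /
     ((1 - q ^ Suc k) * (1 - d * q ^ k) * (1 - e * q ^ k))"
proof -
  have "Suc k choose 2 = (k choose 2) + k"
    by (simp add: numeral_2_eq_2)
  then show ?thesis
    by (simp add: Ecoeff_def qpoch_Suc power_add mult_ac)
qed

lemma fps_nth_qtheta: "fps_nth (qtheta q g) n = inverse q ^ n * (1 - q ^ Suc n) * fps_nth g (Suc n)"
  by (simp add: qtheta_def)

definition qeq_lhs :: "complex \<Rightarrow> complex \<Rightarrow> complex \<Rightarrow> (complex \<Rightarrow> complex \<Rightarrow> complex)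
    \<Rightarrow> complex \<Rightarrow> complex \<Rightarrow> complex" where
  "qeq_lhs Q d e F x y =
     F (x*Q) y - F (x*Q) (y*Q)
     - (d + e) * inverse Q * (F (x*Q) (y*Q) - F (x*Q) (y*Q^2))
     + d * e * inverse Q ^ 2 * (F (x*Q) (y*Q^2) - F (x*Q) (y*Q^3))"

definition qeq_rhs :: "complex \<Rightarrow> complex \<Rightarrow> complex \<Rightarrow> complex \<Rightarrow> (complex \<Rightarrow> complex \<Rightarrow> complex)
    \<Rightarrow> complex \<Rightarrow> complex \<Rightarrow> complex" where
  "qeq_rhs Q a b c F x y =
     (F (x*Q) (y*Q) - F x (y*Q))
     - (a + b + c) * (F (x*Q) (y*Q^2) - F x (y*Q^2))
     + (a*b + a*c + b*c) * (F (x*Q) (y*Q^3) - F x (y*Q^3))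
     - a * b * c * (F (x*Q) (y*Q^4) - F x (y*Q^4))"

lemma qeq_lhs_has_sum:
  fixes C :: "nat \<Rightarrow> nat \<Rightarrow> complex"
  assumes Q: "norm Q \<le> 1" "Q \<noteq> 0"
    and ser: "\<And>x y. norm x < \<rho> \<Longrightarrow> norm y < \<rho> \<Longrightarrow> double_powser_has_sum C x y (F x y)"
    and x: "norm x < \<rho>" and y: "norm y < \<rho>"
  shows "double_powser_has_sum
      (\<lambda>m k. C m k * Q ^ m * ((1 - Q ^ k) * (1 - d * Q ^ k / Q) * (1 - e * Q ^ k / Q)))
      x y (qeq_lhs Q d e F x y)"
proof -
  \<comment> \<open>1 - z - (d+e)/Q (z - z^2) + de/Q^2 (z^2 - z^3) = (1 - z)(1 - dz/Q)(1 - ez/Q) at z = Q^k\<close>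
  have summand: "double_powser_has_sum (\<lambda>m k. C m k * Q ^ m * (Q ^ j) ^ k) x y (F (x*Q) (y*Q^j))" for j
    using double_powser_has_sum_rescale[OF ser x y] Q(1) by (simp add: norm_power power_le_one)
  have "double_powser_has_sum
      (\<lambda>m k. C m k * Q ^ m * (Q ^ 0) ^ k - C m k * Q ^ m * (Q ^ 1) ^ k
        - (d + e) * inverse Q * (C m k * Q ^ m * (Q ^ 1) ^ k - C m k * Q ^ m * (Q ^ 2) ^ k)
        + d * e * inverse Q ^ 2 * (C m k * Q ^ m * (Q ^ 2) ^ k - C m k * Q ^ m * (Q ^ 3) ^ k))
      x y (F (x*Q) (y*Q^0) - F (x*Q) (y*Q^1)
        - (d + e) * inverse Q * (F (x*Q) (y*Q^1) - F (x*Q) (y*Q^2))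
        + d * e * inverse Q ^ 2 * (F (x*Q) (y*Q^2) - F (x*Q) (y*Q^3)))"
    by (intro double_powser_has_sum_add double_powser_has_sum_diff double_powser_has_sum_cmult summand)
  then show ?thesis
    unfolding qeq_lhs_def
    by (rule double_powser_has_sum_cong)
      (use Q(2) in \<open>simp_all add: power_mult[symmetric] mult.commute[of _ k] power_mult field_simps
        power2_eq_square power3_eq_cube\<close>)
qed

lemma qeq_rhs_has_sum:
  fixes C :: "nat \<Rightarrow> nat \<Rightarrow> complex"
  assumes Q: "norm Q \<le> 1"
    and ser: "\<And>x y. norm x < \<rho> \<Longrightarrow> norm y < \<rho> \<Longrightarrow> double_powser_has_sum C x y (F x y)"
    and x: "norm x < \<rho>" and y: "norm y < \<rho>"
  shows "double_powser_has_sum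
      (\<lambda>m k. C m k * (Q ^ m - 1) * (Q ^ k * (1 - a * Q ^ k) * (1 - b * Q ^ k) * (1 - c * Q ^ k)))
      x y (qeq_rhs Q a b c F x y)"
proof -
  have "double_powser_has_sum (\<lambda>m k. C m k * u ^ m * (Q ^ j) ^ k) x y (F (x*u) (y*Q^j))"
    if "norm u \<le> 1" for u j
    using double_powser_has_sum_rescale[OF ser x y that] Q by (simp add: norm_power power_le_one)
  from double_powser_has_sum_diff[OF this[OF Q] this[of 1]]
  have summand: "double_powser_has_sum (\<lambda>m k. C m k * (Q ^ m - 1) * (Q ^ j) ^ k) x y
      (F (x*Q) (y*Q^j) - F x (y*Q^j))" for j
    by (rule double_powser_has_sum_cong) (simp_all add: algebra_simps)
  have "double_powser_has_sum
      (\<lambda>m k. C m k * (Q ^ m - 1) * (Q ^ 1) ^ k - (a + b + c) * (C m k * (Q ^ m - 1) * (Q ^ 2) ^ k)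
        + (a*b + a*c + b*c) * (C m k * (Q ^ m - 1) * (Q ^ 3) ^ k)
        - a * b * c * (C m k * (Q ^ m - 1) * (Q ^ 4) ^ k))
      x y ((F (x*Q) (y*Q^1) - F x (y*Q^1))
        - (a + b + c) * (F (x*Q) (y*Q^2) - F x (y*Q^2))
        + (a*b + a*c + b*c) * (F (x*Q) (y*Q^3) - F x (y*Q^3))
        - a * b * c * (F (x*Q) (y*Q^4) - F x (y*Q^4)))"
    by (intro double_powser_has_sum_add double_powser_has_sum_diff double_powser_has_sum_cmult summand)
  then show ?thesis
    unfolding qeq_rhs_def
    by (rule double_powser_has_sum_cong)
      (simp_all add: power_mult[symmetric] mult.commute[of _ k] power_mult algebra_simps
        power2_eq_square power3_eq_cube power4_eq_xxxx)
qed

lemma qeq_coeff_recurrence: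
  fixes C :: "nat \<Rightarrow> nat \<Rightarrow> complex"
  assumes Q: "norm Q \<le> 1" "Q \<noteq> 0" and \<rho>: "0 < \<rho>"
    and ser: "\<And>x y. norm x < \<rho> \<Longrightarrow> norm y < \<rho> \<Longrightarrow> double_powser_has_sum C x y (F x y)"
    and eq: "\<And>x y. norm x < \<rho> \<Longrightarrow> norm y < \<rho> \<Longrightarrow>
      x * qeq_lhs Q d e F x y = y * qeq_rhs Q a b c F x y"
  shows "C m (Suc k) * Q ^ m * ((1 - Q ^ Suc k) * (1 - d * Q ^ k) * (1 - e * Q ^ k)) =
    C (Suc m) k * (Q ^ Suc m - 1) * (Q ^ k * (1 - a * Q ^ k) * (1 - b * Q ^ k) * (1 - c * Q ^ k))"
proof -
  define L where "L m k = C m k * Q ^ m * ((1 - Q ^ k) * (1 - d * Q ^ k / Q) * (1 - e * Q ^ k / Q))"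
    for m k
  define R where "R m k = C m k * (Q ^ m - 1) * (Q ^ k * (1 - a * Q ^ k) * (1 - b * Q ^ k) * (1 - c * Q ^ k))"
    for m k
  define D where "D m k = (if m = 0 then 0 else L (m - 1) k) - (if k = 0 then 0 else R m (k - 1))"
    for m k
  have "double_powser_has_sum D x y 0" if "norm x < \<rho>" "norm y < \<rho>" for x y
  proof -
    have "double_powser_has_sum L x y (qeq_lhs Q d e F x y)"
      unfolding L_def by (rule qeq_lhs_has_sum[OF Q ser that])
    moreover have "double_powser_has_sum R x y (qeq_rhs Q a b c F x y)"
      unfolding R_def by (rule qeq_rhs_has_sum[OF Q(1) ser that])
    ultimately have "double_powser_has_sum D x y (x * qeq_lhs Q d e F x y - y * qeq_rhs Q a b c F x y)"
      unfolding D_def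
      by (rule double_powser_has_sum_diff[OF double_powser_has_sum_shift_x double_powser_has_sum_shift_y])
    with eq[OF that] show ?thesis
      by simp
  qed
  then have "D (Suc m) (Suc k) = 0"
    by (rule double_powser_eq_0[OF \<rho>])
  with Q(2) show ?thesis
    by (simp add: D_def L_def R_def)
qed

lemma coeffs_eq_Ecoeff_qtheta:
  fixes C :: "nat \<Rightarrow> nat \<Rightarrow> complex"
  assumes Q: "Q \<noteq> 0"
    and nonzero: "\<And>n. qpoch Q Q n \<noteq> 0" "\<And>n. qpoch d Q n \<noteq> 0" "\<And>n. qpoch e Q n \<noteq> 0"
    and rec: "\<And>m k. C m (Suc k) * Q ^ m * ((1 - Q ^ Suc k) * (1 - d * Q ^ k) * (1 - e * Q ^ k)) =
      C (Suc m) k * (Q ^ Suc m - 1) * (Q ^ k * (1 - a * Q ^ k) * (1 - b * Q ^ k) * (1 - c * Q ^ k))"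
  shows "Abs_fps (\<lambda>m. C m k) =
    fps_const (Ecoeff Q a b c d e k) * (qtheta Q ^^ k) (Abs_fps (\<lambda>m. C m 0))"
proof -
  have "C m k = Ecoeff Q a b c d e k * fps_nth ((qtheta Q ^^ k) (Abs_fps (\<lambda>m. C m 0))) m" for m
  proof (induction k arbitrary: m)
    case 0
    then show ?case
      by (simp add: Ecoeff_def qpoch_def binomial_eq_0)
  next
    case (Suc k)
    let ?P = "(1 - Q ^ Suc k) * (1 - d * Q ^ k) * (1 - e * Q ^ k)"
    let ?R = "Q ^ k * (1 - a * Q ^ k) * (1 - b * Q ^ k) * (1 - c * Q ^ k)"
    have "?P \<noteq> 0"
      using nonzero[of "Suc k"] by (simp add: qpoch_Suc)
    have rearrange: "E * T * (B - 1) * R / (A * P) = - E * R / P * (inverse A * (1 - B) * T)"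
      for E T B R A P :: complex
      by (simp add: divide_inverse inverse_mult_distrib algebra_simps)
    from Q rec[of m k] \<open>?P \<noteq> 0\<close>
    have "C m (Suc k) = C (Suc m) k * (Q ^ Suc m - 1) * ?R / (Q ^ m * ?P)"
      by (simp add: eq_divide_eq mult_ac)
    also have "\<dots> = - Ecoeff Q a b c d e k * ?R / ?P * (inverse Q ^ m * (1 - Q ^ Suc m) *
        fps_nth ((qtheta Q ^^ k) (Abs_fps (\<lambda>m. C m 0))) (Suc m))"
      unfolding Suc.IH[of "Suc m"] rearrange power_inverse ..
    finally show ?case
      by (simp only: Ecoeff_Suc fps_nth_qtheta funpow.simps comp_apply)
  qed
  then show ?thesis
    by (intro fps_ext) simp
qed

theorem theorem2:
  fixes f :: "complex \<Rightarrow> complex \<Rightarrow> complex \<Rightarrow> complex \<Rightarrow> complex \<Rightarrow> complex \<Rightarrow> complex \<Rightarrow> complex"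
    and q r \<delta> :: real
  assumes q0: "0 < q" and q1: "q < 1"
    and r0: "r > 0" and ana: "analytic_polydisc7 f r"
    and \<delta>0: "\<delta> > 0"
    and eqn: "\<forall>a b c d e x y.
      norm a < \<delta> \<and> norm b < \<delta> \<and> norm c < \<delta> \<and> norm d < \<delta> \<and> norm e < \<delta> \<and>
      norm x < \<delta> \<and> norm y < \<delta> \<longrightarrow>
      (let Q = complex_of_real q; F = f a b c d e in
        x * ( F (x*Q) y - F (x*Q) (y*Q)
              - (d + e) * inverse Q * (F (x*Q) (y*Q) - F (x*Q) (y*Q^2))
              + d * e * inverse Q ^ 2 * (F (x*Q) (y*Q^2) - F (x*Q) (y*Q^3)) )
        = y * ( (F (x*Q) (y*Q) - F x (y*Q))
              - (a + b + c) * (F (x*Q) (y*Q^2) - F x (y*Q^2))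
              + (a*b + a*c + b*c) * (F (x*Q) (y*Q^3) - F x (y*Q^3))
              - a * b * c * (F (x*Q) (y*Q^4) - F x (y*Q^4)) ))"
  shows "\<forall>a b c d e.
      norm a < min r \<delta> \<and> norm b < min r \<delta> \<and> norm c < min r \<delta> \<and>
      norm d < min r \<delta> \<and> norm e < min r \<delta> \<and>
      (\<forall>n. qpoch d (complex_of_real q) n \<noteq> 0 \<and> qpoch e (complex_of_real q) n \<noteq> 0) \<longrightarrow>
      (\<forall>(\<rho>::real) (C :: nat \<Rightarrow> nat \<Rightarrow> complex).
         \<rho> > 0 \<and>
         (\<forall>x y. norm x < \<rho> \<and> norm y < \<rho> \<longrightarrow>
            ((\<lambda>(m, k). C m k * x ^ m * y ^ k) has_sum f a b c d e x y) UNIV) \<longrightarrow>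
         (\<forall>k. Abs_fps (\<lambda>m. C m k) =
              fps_const (Ecoeff (complex_of_real q) a b c d e k) *
                (qtheta (complex_of_real q) ^^ k) (Abs_fps (\<lambda>m. C m 0))))"
proof (intro allI impI, elim conjE)
  fix a b c d e :: complex and \<rho> :: real and C :: "nat \<Rightarrow> nat \<Rightarrow> complex" and k :: nat
  define Q where "Q = complex_of_real q"
  define F where "F = f a b c d e"
  assume "norm a < min r \<delta>" "norm b < min r \<delta>" "norm c < min r \<delta>"
    "norm d < min r \<delta>" "norm e < min r \<delta>"
    and qpoch_de: "\<forall>n. qpoch d (complex_of_real q) n \<noteq> 0 \<and> qpoch e (complex_of_real q) n \<noteq> 0"
    and \<rho>: "0 < \<rho>"
    and ser: "\<forall>x y. norm x < \<rho> \<and> norm y < \<rho> \<longrightarrow> double_powser_has_sum C x y (f a b c d e x y)"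
  then have "norm a < \<delta>" "norm b < \<delta>" "norm c < \<delta>" "norm d < \<delta>" "norm e < \<delta>"
    by auto
  then have eq: "x * qeq_lhs Q d e F x y = y * qeq_rhs Q a b c F x y"
    if "norm x < min \<rho> \<delta>" "norm y < min \<rho> \<delta>" for x y
    using eqn[rule_format, of a b c d e x y] that
    by (simp add: Q_def F_def qeq_lhs_def qeq_rhs_def Let_def)
  have Q: "norm Q \<le> 1" "Q \<noteq> 0" "norm Q < 1"
    using q0 q1 by (auto simp: Q_def)
  have rec: "C m (Suc j) * Q ^ m * ((1 - Q ^ Suc j) * (1 - d * Q ^ j) * (1 - e * Q ^ j)) =
    C (Suc m) j * (Q ^ Suc m - 1) * (Q ^ j * (1 - a * Q ^ j) * (1 - b * Q ^ j) * (1 - c * Q ^ j))"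
    for m j
    by (rule qeq_coeff_recurrence[where \<rho> = "min \<rho> \<delta>", OF Q(1,2) _ _ eq])
      (use \<rho> \<delta>0 ser in \<open>simp_all add: F_def\<close>)
  show "Abs_fps (\<lambda>m. C m k) =
    fps_const (Ecoeff (complex_of_real q) a b c d e k) *
      (qtheta (complex_of_real q) ^^ k) (Abs_fps (\<lambda>m. C m 0))"
    unfolding Q_def[symmetric]
    by (rule coeffs_eq_Ecoeff_qtheta[OF Q(2) qpoch_nonzero[OF Q(3,1)] _ _ rec])
      (use qpoch_de in \<open>simp_all add: Q_def\<close>)
qed

end
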